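(* Let $\alpha\in(0,1]$, let $G$ be a planar 3-tree with $n$ vertices, and let $T=T(G)$ be its tree of triangles with the weights, heavy nodes and hubs defined as in the context. If $\Delta_1,\Delta_2$ are two distinct heavy nodes of $T$ that are siblings (have the same parent), then both $\Delta_1$ and $\Delta_2$ are hubs.
   Context: A planar 3-tree $G$ is constructed by starting from a triangle and repeatedly inserting a new vertex $u$ into a triangular face $\Delta=v_1v_2v_3$ of the current plane graph, joining $u$ to $v_1,v_2,v_3$. This process is encoded by a rooted tree $T=T(G)$: its nodes are triangles of $G$, its root is the initial triangle, and when $u$ is inserted into the face $\Delta=v_1v_2v_3$ (which is currently a leaf of $T$), the node $\Delta$ receives three children, the triangles $v_1v_2u$, $v_1uv_3$ and $uv_2v_3$. For a node $\Delta$ of $T$, let $V_\Delta$ be the set of vertices of $G$ lying in the interior of $\Delta$ (equivalently, the vertices inserted at nodes of the subtree of $T$ rooted at $\Delta$), and let $\mathrm{weight}(\Delta)=|V_\Delta|$. A node is heavy if its weight is at least $n^\alpha$ and light otherwise. Hubs are defined top-down: the root of $T$ is a hub, and a non-root node $\Delta$ is a hub if $n^\alpha\le \mathrm{weight}(\Delta)\le \mathrm{weight}(\Delta')-n^\alpha$ for every hub $\Delta'$ that is an ancestor of $\Delta$. *)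

theory Defs
  imports Complex_Main
begin

text \<open>The insertion process of a planar 3-tree, recorded as its tree of triangles T(G).
  A node of T is either a face that has not (yet) received a vertex (a leaf)
  or a triangle into which the vertex u was inserted, with its three children
  v1 v2 u, v1 u v3, u v2 v3 (in this order).\<close>
datatype 'v p3t = Face | Ins 'v "'v p3t" "'v p3t" "'v p3t"

primrec inner :: "'v p3t \<Rightarrow> 'v set" where
  "inner Face = {}"
| "inner (Ins u t1 t2 t3) = {u} \<union> inner t1 \<union> inner t2 \<union> inner t3"

primrec wf_p3t :: "'v \<Rightarrow> 'v \<Rightarrow> 'v \<Rightarrow> 'v p3t \<Rightarrow> bool" where
  "wf_p3t v1 v2 v3 Face = True"
| "wf_p3t v1 v2 v3 (Ins u t1 t2 t3) =
     (u \<notin> {v1, v2, v3} \<and> u \<notin> inner t1 \<union> inner t2 \<union> inner t3 \<and>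
      inner t1 \<inter> inner t2 = {} \<and> inner t1 \<inter> inner t3 = {} \<and> inner t2 \<inter> inner t3 = {} \<and>
      wf_p3t v1 v2 u t1 \<and> wf_p3t v1 u v3 t2 \<and> wf_p3t u v2 v3 t3)"

definition planar_3tree :: "'v \<Rightarrow> 'v \<Rightarrow> 'v \<Rightarrow> 'v p3t \<Rightarrow> bool" where
  "planar_3tree v1 v2 v3 T \<longleftrightarrow> distinct [v1, v2, v3] \<and> wf_p3t v1 v2 v3 T"

definition vertices :: "'v \<Rightarrow> 'v \<Rightarrow> 'v \<Rightarrow> 'v p3t \<Rightarrow> 'v set" where
  "vertices v1 v2 v3 T = {v1, v2, v3} \<union> inner T"

fun subtree :: "'v p3t \<Rightarrow> nat list \<Rightarrow> 'v p3t option" where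
  "subtree t [] = Some t"
| "subtree Face (i # p) = None"
| "subtree (Ins u t1 t2 t3) (i # p) =
     (if i = 0 then subtree t1 p else if i = 1 then subtree t2 p
      else if i = 2 then subtree t3 p else None)"

definition is_node :: "'v p3t \<Rightarrow> nat list \<Rightarrow> bool" where
  "is_node T p \<longleftrightarrow> subtree T p \<noteq> None"

definition weight :: "'v p3t \<Rightarrow> nat list \<Rightarrow> nat" where
  "weight T p = card (inner (the (subtree T p)))"

definition heavy :: "'v p3t \<Rightarrow> nat \<Rightarrow> real \<Rightarrow> nat list \<Rightarrow> bool" where
  "heavy T n \<alpha> p \<longleftrightarrow> is_node T p \<and> real (weight T p) \<ge> real n powr \<alpha>"

text \<open>Hubs, defined top-down; the ancestors of p are the proper prefixes take k p, k < length p.\<close>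
function is_hub :: "'v p3t \<Rightarrow> nat \<Rightarrow> real \<Rightarrow> nat list \<Rightarrow> bool" where
  "is_hub T n \<alpha> p =
     (is_node T p \<and>
      (p = [] \<or>
       (real n powr \<alpha> \<le> real (weight T p) \<and>
        (\<forall>k < length p. is_hub T n \<alpha> (take k p) \<longrightarrow>
            real (weight T p) \<le> real (weight T (take k p)) - real n powr \<alpha>))))"
  by pat_completeness auto
termination
  by (relation "measure (\<lambda>(T, n, \<alpha>, p). length p)") auto

end

theory Submission
  imports Defs
begin

text \<open>The vertices inside two distinct children of a triangle are disjoint subsets of the
  vertices inside the triangle, so two heavy siblings each weigh at least \<open>n\<^sup>\<alpha>\<close> less than
  their parent, and hence less than every ancestor, whether a hub or not. The hub condition
  therefore holds for both; the values of \<open>\<alpha>\<close> and \<open>n\<close> play no role.\<close>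

(* the equation of is_hub makes the simplifier unfold it again on every take k p *)
declare is_hub.simps [simp del]

lemma finite_inner: "finite (inner t)"
  by (induction t) auto

lemma subtree_append:
  "subtree t (p @ r) = (case subtree t p of None \<Rightarrow> None | Some s \<Rightarrow> subtree s r)"
  by (induction t p rule: subtree.induct) auto

lemma inner_subtree_subset: "subtree t p = Some s \<Longrightarrow> inner s \<subseteq> inner t"
  by (induction t p rule: subtree.induct) (auto split: if_splits)

lemma wf_p3t_subtree:
  "wf_p3t a b c t \<Longrightarrow> subtree t p = Some s \<Longrightarrow> \<exists>a b c. wf_p3t a b c s"
  by (induction t p arbitrary: a b c rule: subtree.induct) (auto split: if_splits)

lemma is_node_appendD: "is_node T (p @ r) \<Longrightarrow> is_node T p"
  by (auto simp: is_node_def subtree_append split: option.splits)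

lemma weight_append_le:
  assumes "is_node T (p @ r)"
  shows "weight T (p @ r) \<le> weight T p"
proof -
  obtain s where s: "subtree T p = Some s" and sr: "subtree s r \<noteq> None"
    using assms by (auto simp: is_node_def subtree_append split: option.splits)
  then show ?thesis
    using inner_subtree_subset[of s r] by (auto simp: weight_def subtree_append card_mono finite_inner)
qed

lemma inner_children_disjoint:
  assumes "wf_p3t a b c s" and "i \<noteq> j"
    and "subtree s [i] = Some si" and "subtree s [j] = Some sj"
  shows "inner si \<inter> inner sj = {}"
  using assms by (cases s) (auto split: if_splits)

lemma weight_siblings_le:
  assumes wf: "wf_p3t v1 v2 v3 T" and "i \<noteq> j"
    and "is_node T (q @ [i])" and "is_node T (q @ [j])"
  shows "weight T (q @ [i]) + weight T (q @ [j]) \<le> weight T q"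
proof -
  obtain s si sj where s: "subtree T q = Some s"
    and si: "subtree s [i] = Some si" and sj: "subtree s [j] = Some sj"
    using assms(3,4) by (auto simp: is_node_def subtree_append split: option.splits)
  obtain a b c where "wf_p3t a b c s" using wf_p3t_subtree[OF wf s] by blast
  then have "inner si \<inter> inner sj = {}"
    using inner_children_disjoint[OF _ \<open>i \<noteq> j\<close> si sj] by blast
  then have "card (inner si) + card (inner sj) = card (inner si \<union> inner sj)"
    by (simp add: card_Un_disjoint finite_inner)
  also have "\<dots> \<le> card (inner s)"
    using inner_subtree_subset[OF si] inner_subtree_subset[OF sj]
    by (simp add: card_mono finite_inner)
  finally show ?thesis using s si sj by (simp add: weight_def subtree_append)
qed

lemma heavy_sibling_is_hub:
  assumes wf: "wf_p3t v1 v2 v3 T" and "i \<noteq> j"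
    and hi: "heavy T n \<alpha> (q @ [i])" and hj: "heavy T n \<alpha> (q @ [j])"
  shows "is_hub T n \<alpha> (q @ [i])"
proof -
  have ni: "is_node T (q @ [i])" and nj: "is_node T (q @ [j])"
    using hi hj by (auto simp: heavy_def)
  have "real (weight T (q @ [i])) \<le> real (weight T (take k (q @ [i]))) - real n powr \<alpha>"
    if "k < length (q @ [i])" for k
  proof -
    have "take k (q @ [i]) = take k q"
      using that by simp
    moreover have "weight T q \<le> weight T (take k q)"
      using weight_append_le[of T "take k q" "drop k q"] is_node_appendD[OF ni] by simp
    moreover note weight_siblings_le[OF wf \<open>i \<noteq> j\<close> ni nj]
    ultimately show ?thesis
      using hj by (simp add: heavy_def)
  qed
  with ni hi show ?thesis
    by (subst is_hub.simps) (simp add: heavy_def)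
qed

theorem lemma1:
  fixes v1 v2 v3 :: 'v and T :: "'v p3t" and n :: nat and \<alpha> :: real
    and q :: "nat list" and i j :: nat
  assumes "0 < \<alpha>" and "\<alpha> \<le> 1"
    and "planar_3tree v1 v2 v3 T"
    and "n = card (vertices v1 v2 v3 T)"
    and "i \<noteq> j"
    and "heavy T n \<alpha> (q @ [i])" and "heavy T n \<alpha> (q @ [j])"
  shows "is_hub T n \<alpha> (q @ [i]) \<and> is_hub T n \<alpha> (q @ [j])"
proof -
  have wf: "wf_p3t v1 v2 v3 T"
    using \<open>planar_3tree v1 v2 v3 T\<close> by (simp add: planar_3tree_def)
  show ?thesis
    using heavy_sibling_is_hub[OF wf \<open>i \<noteq> j\<close>] heavy_sibling_is_hub[OF wf \<open>i \<noteq> j\<close>[symmetric]]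
      \<open>heavy T n \<alpha> (q @ [i])\<close> \<open>heavy T n \<alpha> (q @ [j])\<close> by blast
qed

end
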